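(* There is an admissible set $T' \subseteq \{0,1,2\}^{1562}$ such that $|T'| = 142 \cdot 37 \cdot \binom{11}{7}^{141}$ and every $t \in T'$ has weight $990$.
   Context: A set $S\subseteq\{0,1,2\}^m$ is admissible if (1) for all distinct $s,s'\in S$ there are coordinates $i,j$ with $s_i=0\neq s'_i$ and $s_j\neq 0=s'_j$; and (2) for all distinct $s,s',s''\in S$ there is a coordinate $k$ such that the multiset $\{s_k,s'_k,s''_k\}$ equals $\{0,1,2\}$, $\{0,0,1\}$ or $\{0,0,2\}$. The weight of a vector is its number of nonzero coordinates. *)

theory Defs
  imports Main "HOL-Library.Multiset"
begin

definition ternary_vecs :: "nat \<Rightarrow> nat list set" where
  "ternary_vecs m = {s. length s = m \<and> set s \<subseteq> {0, 1, 2}}"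

definition admissible :: "nat \<Rightarrow> nat list set \<Rightarrow> bool" where
  "admissible m S \<longleftrightarrow>
     S \<subseteq> ternary_vecs m \<and>
     (\<forall>s\<in>S. \<forall>s'\<in>S. s \<noteq> s' \<longrightarrow>
        (\<exists>i<m. s ! i = 0 \<and> s' ! i \<noteq> 0) \<and> (\<exists>j<m. s ! j \<noteq> 0 \<and> s' ! j = 0)) \<and>
     (\<forall>s\<in>S. \<forall>s'\<in>S. \<forall>s''\<in>S. s \<noteq> s' \<and> s \<noteq> s'' \<and> s' \<noteq> s'' \<longrightarrow>
        (\<exists>k<m. mset [s ! k, s' ! k, s'' ! k] \<in> {{#0, 1, 2#}, {#0, 0, 1#}, {#0, 0, 2#}}))"

definition weight :: "nat list \<Rightarrow> nat" where
  "weight s = card {i. i < length s \<and> s ! i \<noteq> 0}"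

end

theory Submission
  imports Defs "HOL-Library.FuncSet" "HOL-Library.Cardinality"
begin

text \<open>
  Split the 1562 coordinates into 142 blocks of 11, indexed by the points of an 11-point set
  carrying a 0/1 matrix M. A set A of points is encoded by the block that vanishes off A and at
  q in A is 1 or 2 according to the parity of the number of j in A with M q j. For the chosen M
  an exhaustive search shows that any three disjoint nonempty sets of equal size are told apart
  by such parities; hence the blocks of all 7-sets form an admissible family L, so do the
  blocks U obtained from them by exchanging 1 and 2, and the blocks of 37 suitable 3-sets form
  an admissible family Z. Layer j consists of the words whose blocks before position j lie in L,
  at position j in Z and after j in U. Words of one layer are told apart in a block where they
  differ; words of different layers in the Z-block of one of them, the only delicate case being
  a U-, a Z- and an L-block at the position of the middle layer, which is where the choice of
  the 37 triples enters. This gives 142 layers of 37 * 330^141 words, each of weight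
  3 + 141 * 7 = 990.
\<close>

section \<open>Admissibility column by column\<close>

definition good_column :: "nat \<Rightarrow> nat \<Rightarrow> nat \<Rightarrow> bool" where
  "good_column a b c \<longleftrightarrow> mset [a, b, c] \<in> {{#0, 1, 2#}, {#0, 0, 1#}, {#0, 0, 2#}}"

lemma good_columnI:
  assumes "a \<in> {0, 1, 2}" "b \<in> {0, 1, 2}" "c \<in> {0, 1, 2}"
    and "(a \<noteq> 0 \<and> b = 0 \<and> c = 0) \<or> (a = 0 \<and> b \<noteq> 0 \<and> c = 0) \<or> (a = 0 \<and> b = 0 \<and> c \<noteq> 0) \<or>
      (a \<noteq> b \<and> a \<noteq> c \<and> b \<noteq> c)"
  shows "good_column a b c"
  using assms by (auto simp: good_column_def add_mset_commute)

lemma good_column_swap12: "good_column a b c \<longleftrightarrow> good_column b a c"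
  by (simp add: good_column_def add_mset_commute)

lemma good_column_swap23: "good_column a b c \<longleftrightarrow> good_column a c b"
  by (simp add: good_column_def add_mset_commute)

definition outside_support :: "nat \<Rightarrow> nat list \<Rightarrow> nat list \<Rightarrow> bool" where
  "outside_support n s t \<longleftrightarrow> (\<exists>i<n. s ! i = 0 \<and> t ! i \<noteq> 0)"

definition has_good_column :: "nat \<Rightarrow> nat list \<Rightarrow> nat list \<Rightarrow> nat list \<Rightarrow> bool" where
  "has_good_column n s t u \<longleftrightarrow> (\<exists>k<n. good_column (s ! k) (t ! k) (u ! k))"

lemma has_good_column_swap12: "has_good_column n s t u \<longleftrightarrow> has_good_column n t s u"
  unfolding has_good_column_def using good_column_swap12 by blast

lemma has_good_column_swap23: "has_good_column n s t u \<longleftrightarrow> has_good_column n s u t"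
  unfolding has_good_column_def using good_column_swap23 by blast

lemma nth_ternary_vecs: "s \<in> ternary_vecs n \<Longrightarrow> i < n \<Longrightarrow> s ! i \<in> {0, 1, 2}"
  unfolding ternary_vecs_def using nth_mem by blast

lemma has_good_column_if_outside_support:
  assumes "outside_support n s t" "t \<in> ternary_vecs n"
  shows "has_good_column n s s t"
proof -
  obtain i where i: "i < n" "s ! i = 0" "t ! i \<noteq> 0"
    using assms(1) by (auto simp: outside_support_def)
  have "t ! i \<in> {0, 1, 2}"
    using assms(2) i(1) by (rule nth_ternary_vecs)
  then have "good_column (s ! i) (s ! i) (t ! i)"
    using i by (intro good_columnI) auto
  then show ?thesis
    using i(1) by (auto simp: has_good_column_def)
qed

lemma admissible_iff:
  "admissible m S \<longleftrightarrow> S \<subseteq> ternary_vecs m \<and>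
     (\<forall>s\<in>S. \<forall>t\<in>S. s \<noteq> t \<longrightarrow> outside_support m s t) \<and>
     (\<forall>s\<in>S. \<forall>t\<in>S. \<forall>u\<in>S. s \<noteq> t \<and> s \<noteq> u \<and> t \<noteq> u \<longrightarrow> has_good_column m s t u)"
  (is "_ \<longleftrightarrow> ?rhs")
proof
  assume "admissible m S"
  then show "?rhs"
    by (auto simp: admissible_def outside_support_def has_good_column_def good_column_def)
next
  assume rhs: ?rhs
  show "admissible m S"
    unfolding admissible_def
  proof (intro conjI ballI impI)
    fix s t assume "s \<in> S" "t \<in> S" "s \<noteq> t"
    then have "outside_support m s t" "outside_support m t s"
      using rhs by auto
    then show "\<exists>i<m. s ! i = 0 \<and> t ! i \<noteq> 0" "\<exists>j<m. s ! j \<noteq> 0 \<and> t ! j = 0"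
      unfolding outside_support_def by auto
  qed (use rhs in \<open>auto simp: has_good_column_def good_column_def\<close>)
qed

lemma admissible_subset: "admissible m S \<Longrightarrow> T \<subseteq> S \<Longrightarrow> admissible m T"
  unfolding admissible_def by blast

lemma admissible_has_good_column:
  assumes "admissible n F" "x1 \<in> F" "x2 \<in> F" "x3 \<in> F" "x1 \<noteq> x2"
  shows "has_good_column n x1 x2 x3"
proof -
  have outside: "outside_support n x1 x2" "outside_support n x2 x1"
    and ternary: "x1 \<in> ternary_vecs n" "x2 \<in> ternary_vecs n"
    using assms by (auto simp: admissible_iff)
  consider "x3 = x1" | "x3 = x2" | "x3 \<noteq> x1" "x3 \<noteq> x2"
    by blast
  then show ?thesis
  proof cases
    case 1
    then show ?thesis
      using has_good_column_if_outside_support[OF outside(1) ternary(2)] has_good_column_swap23 by blast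
  next
    case 2
    then show ?thesis
      using has_good_column_if_outside_support[OF outside(2) ternary(1)]
        has_good_column_swap12 has_good_column_swap23 by blast
  next
    case 3
    then show ?thesis
      using assms by (auto simp: admissible_iff)
  qed
qed

lemma weight_eq_length_filter: "weight s = length (filter (\<lambda>x. x \<noteq> 0) s)"
  by (simp add: weight_def length_filter_conv_card)

lemma weight_concat: "weight (concat bs) = (\<Sum>x\<leftarrow>bs. weight x)"
  by (induction bs) (simp_all add: weight_eq_length_filter)

lemma nth_concat_equal_length:
  assumes "\<forall>x\<in>set bs. length x = n" "b < length bs" "k < n"
  shows "concat bs ! (n * b + k) = bs ! b ! k"
  using assms
proof (induction bs arbitrary: b)
  case Nil
  then show ?case by simp
next
  case (Cons x xs)
  then show ?case
    by (cases b) (simp_all add: nth_append)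
qed

lemma block_index_less:
  fixes b k n N :: nat
  assumes "b < N" "k < n"
  shows "n * b + k < N * n"
proof -
  have "n * b + k < n * Suc b"
    using assms(2) by simp
  also have "\<dots> \<le> n * N"
    using assms(1) by (intro mult_le_mono2) simp
  finally show ?thesis
    by (simp add: mult.commute)
qed

section \<open>The staircase construction\<close>

definition block_product :: "nat \<Rightarrow> (nat \<Rightarrow> 'a set) \<Rightarrow> 'a list set" where
  "block_product N F = {bs. length bs = N \<and> (\<forall>b<N. bs ! b \<in> F b)}"

lemma card_block_product:
  assumes "\<And>b. b < N \<Longrightarrow> finite (F b)"
  shows "card (block_product N F) = (\<Prod>b<N. card (F b))"
proof -
  have "bij_betw (\<lambda>f. map f [0..<N]) (PiE {..<N} F) (block_product N F)"
    by (rule bij_betwI[where g = "\<lambda>bs. restrict (nth bs) {..<N}"])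
      (auto simp: block_product_def PiE_def extensional_def fun_eq_iff intro: nth_equalityI)
  then show ?thesis
    using card_PiE[of "{..<N}" F] by (simp add: bij_betw_same_card)
qed

lemma finite_block_product:
  assumes "\<And>b. b < N \<Longrightarrow> finite (F b)"
  shows "finite (block_product N F)"
proof (rule finite_subset)
  show "block_product N F \<subseteq> {bs. set bs \<subseteq> (\<Union>b<N. F b) \<and> length bs = N}"
    by (fastforce simp: block_product_def in_set_conv_nth)
  show "finite {bs. set bs \<subseteq> (\<Union>b<N. F b) \<and> length bs = N}"
    using assms by (intro finite_lists_length_eq) auto
qed

lemma linorder_wlog3:
  fixes x y z :: "'a::linorder"
  assumes "\<And>x y z. x \<le> y \<Longrightarrow> y \<le> z \<Longrightarrow> P x y z"
    and "\<And>x y z. P x y z \<Longrightarrow> P y x z"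
    and "\<And>x y z. P x y z \<Longrightarrow> P x z y"
  shows "P x y z"
  by (metis assms nle_le)

locale staircase =
  fixes n :: nat and L Z U :: "nat list set"
  assumes admissible_L: "admissible n L"
    and admissible_Z: "admissible n Z"
    and admissible_U: "admissible n U"
    and Z_outside_support: "\<And>z x. z \<in> Z \<Longrightarrow> x \<in> L \<union> U \<Longrightarrow> outside_support n z x"
    and Z_Z_good: "\<And>z z' x. z \<in> Z \<Longrightarrow> z' \<in> Z \<Longrightarrow> z \<noteq> z' \<Longrightarrow> x \<in> L \<union> U \<Longrightarrow> has_good_column n z z' x"
    and U_Z_L_good: "\<And>u z l. u \<in> U \<Longrightarrow> z \<in> Z \<Longrightarrow> l \<in> L \<Longrightarrow> has_good_column n u z l"
begin

definition family :: "nat \<Rightarrow> nat \<Rightarrow> nat list set" where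
  "family j b = (if b < j then L else if b = j then Z else U)"

definition words :: "nat \<Rightarrow> nat list set" where
  "words N = (\<Union>j<N. concat ` block_product N (family j))"

lemma admissible_family: "admissible n (family j b)"
  by (simp add: family_def admissible_L admissible_Z admissible_U)

lemma family_ternary: "family j b \<subseteq> ternary_vecs n"
  using admissible_family by (simp add: admissible_iff)

lemma block_in_family: "bs \<in> block_product N (family j) \<Longrightarrow> b < N \<Longrightarrow> bs ! b \<in> family j b"
  by (simp add: block_product_def)

lemma length_blocks:
  assumes "bs \<in> block_product N (family j)"
  shows "length bs = N" and "\<forall>x\<in>set bs. length x = n"
proof -
  show "length bs = N"
    using assms by (simp add: block_product_def)
  then show "\<forall>x\<in>set bs. length x = n"
    using assms family_ternary by (fastforce simp: block_product_def in_set_conv_nth ternary_vecs_def)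
qed

lemma nth_concat_blocks:
  assumes "bs \<in> block_product N (family j)" "b < N" "k < n"
  shows "concat bs ! (n * b + k) = bs ! b ! k"
  using length_blocks[OF assms(1)] assms(2,3) by (simp add: nth_concat_equal_length)

lemma Z_Z_good_all:
  assumes "z \<in> Z" "z' \<in> Z" "x \<in> L \<union> U"
  shows "has_good_column n z z' x"
proof (cases "z = z'")
  case True
  have "x \<in> ternary_vecs n"
    using assms(3) admissible_L admissible_U by (auto simp: admissible_def)
  then show ?thesis
    using True has_good_column_if_outside_support Z_outside_support assms by blast
qed (use Z_Z_good assms in blast)

lemma blocks_outside_support:
  assumes "bs \<in> block_product N (family j)" "bs' \<in> block_product N (family j')"
    and "j < N" "j' < N" "bs \<noteq> bs'"
  shows "\<exists>b<N. outside_support n (bs ! b) (bs' ! b)"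
proof (cases "j = j'")
  case True
  obtain b where b: "b < N" "bs ! b \<noteq> bs' ! b"
    using assms(5) length_blocks(1)[OF assms(1)] length_blocks(1)[OF assms(2)] nth_equalityI by metis
  then have "outside_support n (bs ! b) (bs' ! b)"
    using admissible_family[of j b] block_in_family assms(1,2) True by (auto simp: admissible_iff)
  with b show ?thesis by blast
next
  case False
  then have "bs ! j \<in> Z" "bs' ! j \<in> L \<union> U"
    using block_in_family[OF assms(1) assms(3)] block_in_family[OF assms(2) assms(3)]
    by (auto simp: family_def split: if_splits)
  then show ?thesis
    using Z_outside_support assms(3) by blast
qed

lemma blocks_good_column_sorted:
  assumes bs: "bs1 \<in> block_product N (family j1)" "bs2 \<in> block_product N (family j2)"
      "bs3 \<in> block_product N (family j3)"
    and j: "j1 \<le> j2" "j2 \<le> j3" "j3 < N"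
    and distinct: "bs1 \<noteq> bs2" "bs1 \<noteq> bs3" "bs2 \<noteq> bs3"
  shows "\<exists>b<N. has_good_column n (bs1 ! b) (bs2 ! b) (bs3 ! b)"
proof -
  have block: "bs1 ! b \<in> family j1 b" "bs2 ! b \<in> family j2 b" "bs3 ! b \<in> family j3 b" if "b < N" for b
    using block_in_family bs that by blast+
  consider "j1 = j2" "j2 = j3" | "j1 = j2" "j2 < j3" | "j1 < j2" "j2 = j3" | "j1 < j2" "j2 < j3"
    using j by linarith
  then show ?thesis
  proof cases
    case 1
    obtain b where b: "b < N" "bs1 ! b \<noteq> bs2 ! b"
      using distinct(1) length_blocks(1)[OF bs(1)] length_blocks(1)[OF bs(2)] nth_equalityI by metis
    have "has_good_column n (bs1 ! b) (bs2 ! b) (bs3 ! b)"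
      by (rule admissible_has_good_column[OF admissible_family[of j1 b]]) (use block[OF b(1)] 1 b(2) in auto)
    with b(1) show ?thesis
      by blast
  next
    case 2
    then have "bs1 ! j1 \<in> Z" "bs2 ! j1 \<in> Z" "bs3 ! j1 \<in> L"
      using block[of j1] j by (simp_all add: family_def)
    then show ?thesis
      using Z_Z_good_all j by (metis UnI1 le_less_trans)
  next
    case 3
    then have "bs1 ! j2 \<in> U" "bs2 ! j2 \<in> Z" "bs3 ! j2 \<in> Z"
      using block[of j2] j by (simp_all add: family_def)
    then have "has_good_column n (bs2 ! j2) (bs3 ! j2) (bs1 ! j2)"
      using Z_Z_good_all by blast
    then show ?thesis
      using has_good_column_swap12 has_good_column_swap23 j by (metis le_less_trans)
  next
    case 4
    then have "bs1 ! j2 \<in> U" "bs2 ! j2 \<in> Z" "bs3 ! j2 \<in> L"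
      using block[of j2] j by (simp_all add: family_def)
    then show ?thesis
      using U_Z_L_good j by (metis le_less_trans)
  qed
qed

lemma blocks_good_column:
  assumes "bs1 \<in> block_product N (family j1)" "bs2 \<in> block_product N (family j2)"
      "bs3 \<in> block_product N (family j3)"
    and "j1 < N" "j2 < N" "j3 < N" "bs1 \<noteq> bs2" "bs1 \<noteq> bs3" "bs2 \<noteq> bs3"
  shows "\<exists>b<N. has_good_column n (bs1 ! b) (bs2 ! b) (bs3 ! b)"
proof -
  define P where "P j1 j2 j3 \<longleftrightarrow> (\<forall>bs1 bs2 bs3.
    bs1 \<in> block_product N (family j1) \<longrightarrow> bs2 \<in> block_product N (family j2) \<longrightarrow>
    bs3 \<in> block_product N (family j3) \<longrightarrow> j1 < N \<longrightarrow> j2 < N \<longrightarrow> j3 < N \<longrightarrow>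
    bs1 \<noteq> bs2 \<longrightarrow> bs1 \<noteq> bs3 \<longrightarrow> bs2 \<noteq> bs3 \<longrightarrow>
    (\<exists>b<N. has_good_column n (bs1 ! b) (bs2 ! b) (bs3 ! b)))" for j1 j2 j3
  have "P j1 j2 j3"
  proof (rule linorder_wlog3[of P])
    show "P x y z" if "x \<le> y" "y \<le> z" for x y z
      using blocks_good_column_sorted that unfolding P_def by blast
    show "P y x z" if "P x y z" for x y z
      using that has_good_column_swap12 unfolding P_def by metis
    show "P x z y" if "P x y z" for x y z
      using that has_good_column_swap23 unfolding P_def by metis
  qed
  then show ?thesis
    using assms unfolding P_def by blast
qed

lemma concat_blocks_eq_iff:
  assumes "bs \<in> block_product N (family j)" "bs' \<in> block_product N (family j')"
  shows "concat bs = concat bs' \<longleftrightarrow> bs = bs'"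
  using length_blocks[OF assms(1)] length_blocks[OF assms(2)]
  by (intro concat_eq_concat_iff) (fastforce dest: set_zip_leftD set_zip_rightD)+

lemma concat_blocks_ternary:
  assumes "bs \<in> block_product N (family j)"
  shows "concat bs \<in> ternary_vecs (N * n)"
proof -
  have "length (concat bs) = (\<Sum>x\<leftarrow>bs. n)"
    unfolding length_concat using length_blocks(2)[OF assms] by (metis map_eq_conv)
  then have "length (concat bs) = N * n"
    using length_blocks(1)[OF assms] by (simp add: sum_list_triv)
  moreover have "set (concat bs) \<subseteq> {0, 1, 2}"
    using assms family_ternary by (fastforce simp: block_product_def in_set_conv_nth ternary_vecs_def)
  ultimately show ?thesis
    by (simp add: ternary_vecs_def)
qed

lemma outside_support_concat:
  assumes "bs \<in> block_product N (family j)" "bs' \<in> block_product N (family j')"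
    and "b < N" "outside_support n (bs ! b) (bs' ! b)"
  shows "outside_support (N * n) (concat bs) (concat bs')"
proof -
  obtain k where "k < n" "bs ! b ! k = 0" "bs' ! b ! k \<noteq> 0"
    using assms(4) by (auto simp: outside_support_def)
  then show ?thesis
    unfolding outside_support_def
    using nth_concat_blocks assms(1,2,3) block_index_less by metis
qed

lemma has_good_column_concat:
  assumes "bs1 \<in> block_product N (family j1)" "bs2 \<in> block_product N (family j2)"
      "bs3 \<in> block_product N (family j3)"
    and "b < N" "has_good_column n (bs1 ! b) (bs2 ! b) (bs3 ! b)"
  shows "has_good_column (N * n) (concat bs1) (concat bs2) (concat bs3)"
proof -
  obtain k where "k < n" "good_column (bs1 ! b ! k) (bs2 ! b ! k) (bs3 ! b ! k)"
    using assms(5) by (auto simp: has_good_column_def)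
  then show ?thesis
    unfolding has_good_column_def
    using nth_concat_blocks assms(1,2,3,4) block_index_less by metis
qed

lemma mem_words: "s \<in> words N \<longleftrightarrow> (\<exists>j<N. \<exists>bs\<in>block_product N (family j). s = concat bs)"
  by (auto simp: words_def)

theorem admissible_words: "admissible (N * n) (words N)"
  unfolding admissible_iff
proof (intro conjI ballI impI subsetI)
  show "s \<in> ternary_vecs (N * n)" if "s \<in> words N" for s
    using that concat_blocks_ternary by (auto simp: mem_words)
next
  fix s t assume "s \<in> words N" "t \<in> words N" "s \<noteq> t"
  then obtain j j' bs bs' where
    bs: "j < N" "j' < N" "bs \<in> block_product N (family j)" "bs' \<in> block_product N (family j')"
    and st: "s = concat bs" "t = concat bs'"
    by (auto simp: mem_words)
  moreover have "bs \<noteq> bs'"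
    using st \<open>s \<noteq> t\<close> by auto
  ultimately show "outside_support (N * n) s t"
    using blocks_outside_support outside_support_concat by metis
next
  fix s t u assume "s \<in> words N" "t \<in> words N" "u \<in> words N" "s \<noteq> t \<and> s \<noteq> u \<and> t \<noteq> u"
  then obtain j1 j2 j3 bs1 bs2 bs3 where
    bs: "j1 < N" "j2 < N" "j3 < N" "bs1 \<in> block_product N (family j1)"
      "bs2 \<in> block_product N (family j2)" "bs3 \<in> block_product N (family j3)"
    and stu: "s = concat bs1" "t = concat bs2" "u = concat bs3"
    by (auto simp: mem_words)
  moreover have "bs1 \<noteq> bs2" "bs1 \<noteq> bs3" "bs2 \<noteq> bs3"
    using stu \<open>s \<noteq> t \<and> s \<noteq> u \<and> t \<noteq> u\<close> by auto
  ultimately show "has_good_column (N * n) s t u"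
    using blocks_good_column has_good_column_concat by metis
qed

lemma layers_disjoint:
  assumes "j < N" "j' < N" "j \<noteq> j'"
  shows "concat ` block_product N (family j) \<inter> concat ` block_product N (family j') = {}"
proof (rule ccontr)
  assume "concat ` block_product N (family j) \<inter> concat ` block_product N (family j') \<noteq> {}"
  then obtain bs bs' where bs: "bs \<in> block_product N (family j)" "bs' \<in> block_product N (family j')"
    "concat bs = concat bs'"
    by blast
  then have "bs = bs'"
    using concat_blocks_eq_iff by blast
  then have "bs ! j \<in> family j j" "bs ! j \<in> family j' j"
    using block_in_family bs assms(1) by auto
  then have "bs ! j \<in> Z" "bs ! j \<in> L \<union> U"
    using assms(3) by (auto simp: family_def split: if_splits)
  then have "outside_support n (bs ! j) (bs ! j)"
    by (rule Z_outside_support)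
  then show False
    by (auto simp: outside_support_def)
qed

theorem card_words:
  assumes "finite L" "finite Z" "finite U" "card U = card L"
  shows "card (words N) = N * card Z * card L ^ (N - 1)"
proof -
  have finite_family: "finite (family j b)" for j b
    using assms(1-3) by (simp add: family_def)
  have card_layer: "card (concat ` block_product N (family j)) = card Z * card L ^ (N - 1)"
    if "j < N" for j
  proof -
    have "card (concat ` block_product N (family j)) = card (block_product N (family j))"
      by (rule card_image) (auto simp: inj_on_def concat_blocks_eq_iff)
    also have "\<dots> = (\<Prod>b<N. card (family j b))"
      by (rule card_block_product) (rule finite_family)
    also have "\<dots> = (\<Prod>b<N. if b = j then card Z else card L)"
      using assms(4) by (intro prod.cong) (auto simp: family_def)
    also have "\<dots> = card Z * card L ^ (N - 1)"
      using that by (simp add: prod.delta_remove)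
    finally show ?thesis .
  qed
  have "card (words N) = (\<Sum>j<N. card (concat ` block_product N (family j)))"
    unfolding words_def
    by (rule card_UN_disjoint) (auto simp: layers_disjoint finite_block_product finite_family)
  also have "\<dots> = N * (card Z * card L ^ (N - 1))"
    using card_layer by simp
  finally show ?thesis
    by (simp add: mult.assoc)
qed

theorem weight_words:
  assumes "\<And>x. x \<in> L \<union> U \<Longrightarrow> weight x = w" "\<And>z. z \<in> Z \<Longrightarrow> weight z = w'"
    and "s \<in> words N"
  shows "weight s = w' + (N - 1) * w"
proof -
  obtain j bs where j: "j < N" "bs \<in> block_product N (family j)" "s = concat bs"
    using assms(3) by (auto simp: mem_words)
  have "weight s = (\<Sum>b<N. weight (bs ! b))"
    using j(3) length_blocks(1)[OF j(2)] by (simp add: weight_concat sum_list_sum_nth atLeast0LessThan)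
  also have "\<dots> = (\<Sum>b<N. if b = j then w' else w)"
  proof (rule sum.cong)
    fix b assume "b \<in> {..<N}"
    then have "bs ! b \<in> family j b"
      using block_in_family j(2) by simp
    then show "weight (bs ! b) = (if b = j then w' else w)"
      using assms(1,2) by (auto simp: family_def split: if_splits)
  qed simp
  also have "\<dots> = w' + (N - 1) * w"
    using j(1) by (simp add: sum.delta_remove)
  finally show ?thesis .
qed

end

section \<open>Parity labellings\<close>

definition parity :: "('a \<Rightarrow> 'a \<Rightarrow> bool) \<Rightarrow> 'a \<Rightarrow> 'a set \<Rightarrow> bool" where
  "parity M i A \<longleftrightarrow> odd (card {j \<in> A. M i j})"

lemma parity_empty [simp]: "\<not> parity M i {}"
  by (simp add: parity_def)

lemma parity_Un:
  fixes M :: "'a::finite \<Rightarrow> 'a \<Rightarrow> bool"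
  assumes "A \<inter> B = {}"
  shows "parity M i (A \<union> B) \<longleftrightarrow> parity M i A \<noteq> parity M i B"
proof -
  have "{j \<in> A \<union> B. M i j} = {j \<in> A. M i j} \<union> {j \<in> B. M i j}"
    by auto
  then have "card {j \<in> A \<union> B. M i j} = card {j \<in> A. M i j} + card {j \<in> B. M i j}"
    using assms by (simp add: card_Un_disjoint disjoint_iff)
  then show ?thesis
    by (simp add: parity_def)
qed

lemma parity_insert:
  fixes M :: "'a::finite \<Rightarrow> 'a \<Rightarrow> bool"
  assumes "p \<notin> A"
  shows "parity M i (insert p A) \<longleftrightarrow> M i p \<noteq> parity M i A"
proof -
  have "{j \<in> {p}. M i j} = (if M i p then {p} else {})"
    by auto
  then have "parity M i {p} \<longleftrightarrow> M i p"
    by (simp add: parity_def)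
  then show ?thesis
    using parity_Un[of "{p}" A M i] assms by simp
qed

lemma parity_cong:
  assumes "\<And>j. j \<in> A \<Longrightarrow> M i j = M' i j"
  shows "parity M i A = parity M' i A"
proof -
  have "{j \<in> A. M i j} = {j \<in> A. M' i j}"
    using assms by blast
  then show ?thesis
    by (simp add: parity_def)
qed

definition parity_separated :: "('a \<Rightarrow> 'a \<Rightarrow> bool) \<Rightarrow> 'a set \<Rightarrow> 'a set \<Rightarrow> 'a set \<Rightarrow> bool" where
  "parity_separated M X Y Z \<longleftrightarrow>
     (\<exists>i\<in>X. parity M i Y \<noteq> parity M i Z) \<or> (\<exists>i\<in>Y. parity M i X \<noteq> parity M i Z) \<or>
     (\<exists>i\<in>Z. parity M i X \<noteq> parity M i Y)"

lemma parity_separated_swap12: "parity_separated M X Y Z \<longleftrightarrow> parity_separated M Y X Z"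
  unfolding parity_separated_def by blast

lemma parity_separated_swap23: "parity_separated M X Y Z \<longleftrightarrow> parity_separated M X Z Y"
  unfolding parity_separated_def by blast

definition triple_separating :: "('a \<Rightarrow> 'a \<Rightarrow> bool) \<Rightarrow> bool" where
  "triple_separating M \<longleftrightarrow> (\<forall>X Y Z. X \<inter> Y = {} \<longrightarrow> X \<inter> Z = {} \<longrightarrow> Y \<inter> Z = {} \<longrightarrow>
     card X = card Y \<longrightarrow> card Y = card Z \<longrightarrow> X \<noteq> {} \<longrightarrow> parity_separated M X Y Z)"

definition parity_label :: "('a \<Rightarrow> 'a \<Rightarrow> bool) \<Rightarrow> 'a set \<Rightarrow> 'a \<Rightarrow> nat" where
  "parity_label M A q = (if q \<notin> A then 0 else if parity M q A then 2 else 1)"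

lemma parity_label_range: "parity_label M A q \<in> {0, 1, 2}"
  by (simp add: parity_label_def)

lemma parity_label_eq_0_iff: "parity_label M A q = 0 \<longleftrightarrow> q \<notin> A"
  by (simp add: parity_label_def)

lemma parity_label_good_column:
  fixes M :: "'a::finite \<Rightarrow> 'a \<Rightarrow> bool"
  assumes M: "triple_separating M"
    and card: "card A = card B" "card A = card C" and distinct: "A \<noteq> B" "A \<noteq> C" "B \<noteq> C"
  shows "\<exists>q. good_column (parity_label M A q) (parity_label M B q) (parity_label M C q)"
proof (cases "\<exists>q. (q \<in> A \<and> q \<notin> B \<and> q \<notin> C) \<or> (q \<notin> A \<and> q \<in> B \<and> q \<notin> C) \<or> (q \<notin> A \<and> q \<notin> B \<and> q \<in> C)")
  case True
  then obtain q where "(q \<in> A \<and> q \<notin> B \<and> q \<notin> C) \<or> (q \<notin> A \<and> q \<in> B \<and> q \<notin> C) \<or> (q \<notin> A \<and> q \<notin> B \<and> q \<in> C)"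
    by blast
  then have "good_column (parity_label M A q) (parity_label M B q) (parity_label M C q)"
    by (intro good_columnI parity_label_range) (auto simp: parity_label_eq_0_iff)
  then show ?thesis ..
next
  case False
  define D X Y Z where "D = A \<inter> B \<inter> C" and "X = A \<inter> B - C" and "Y = A \<inter> C - B" and "Z = B \<inter> C - A"
  have A: "A = D \<union> X \<union> Y" and B: "B = D \<union> X \<union> Z" and C: "C = D \<union> Y \<union> Z"
    using False by (auto simp: D_def X_def Y_def Z_def)
  have disjoint: "D \<inter> X = {}" "D \<inter> Y = {}" "D \<inter> Z = {}" "X \<inter> Y = {}" "X \<inter> Z = {}" "Y \<inter> Z = {}"
    by (auto simp: D_def X_def Y_def Z_def)
  have "card A = card D + card X + card Y" "card B = card D + card X + card Z"
      "card C = card D + card Y + card Z"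
    using disjoint by (simp_all add: A B C card_Un_disjoint Int_Un_distrib2)
  then have card_XYZ: "card X = card Y" "card Y = card Z"
    using card by simp_all
  have "X \<noteq> {}"
  proof
    assume "X = {}"
    then have "Y = {}" "Z = {}"
      using card_XYZ by (simp_all add: card_eq_0_iff)
    then show False
      using \<open>X = {}\<close> distinct(1) A B by simp
  qed
  then have "parity_separated M X Y Z"
    using M disjoint card_XYZ by (simp add: triple_separating_def)
  moreover have parity_A: "parity M i A \<longleftrightarrow> (parity M i D \<noteq> parity M i X) \<noteq> parity M i Y"
    and parity_B: "parity M i B \<longleftrightarrow> (parity M i D \<noteq> parity M i X) \<noteq> parity M i Z"
    and parity_C: "parity M i C \<longleftrightarrow> (parity M i D \<noteq> parity M i Y) \<noteq> parity M i Z" for i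
    using disjoint by (simp_all add: A B C parity_Un Int_Un_distrib2)
  ultimately obtain q where
    "(q \<in> A \<and> q \<in> B \<and> q \<notin> C \<and> parity M q A \<noteq> parity M q B) \<or>
     (q \<in> A \<and> q \<notin> B \<and> q \<in> C \<and> parity M q A \<noteq> parity M q C) \<or>
     (q \<notin> A \<and> q \<in> B \<and> q \<in> C \<and> parity M q B \<noteq> parity M q C)"
    unfolding parity_separated_def by (auto simp: X_def Y_def Z_def)
  then have "good_column (parity_label M A q) (parity_label M B q) (parity_label M C q)"
    by (intro good_columnI parity_label_range) (auto simp: parity_label_def)
  then show ?thesis ..
qed

definition flip_diag :: "('a \<Rightarrow> 'a \<Rightarrow> bool) \<Rightarrow> 'a \<Rightarrow> 'a \<Rightarrow> bool" where
  "flip_diag M i j \<longleftrightarrow> M i j \<noteq> (i = j)"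

lemma parity_flip_diag:
  fixes M :: "'a::finite \<Rightarrow> 'a \<Rightarrow> bool"
  shows "parity (flip_diag M) i A \<longleftrightarrow> parity M i A \<noteq> (i \<in> A)"
proof (cases "i \<in> A")
  case True
  have off_diagonal: "parity (flip_diag M) i (A - {i}) = parity M i (A - {i})"
    by (rule parity_cong) (auto simp: flip_diag_def)
  have A: "insert i (A - {i}) = A"
    using True by blast
  have "parity (flip_diag M) i A \<longleftrightarrow> flip_diag M i i \<noteq> parity (flip_diag M) i (A - {i})"
    using parity_insert[of i "A - {i}" "flip_diag M" i] unfolding A by simp
  moreover have "parity M i A \<longleftrightarrow> M i i \<noteq> parity M i (A - {i})"
    using parity_insert[of i "A - {i}" M i] unfolding A by simp
  moreover have "flip_diag M i i \<longleftrightarrow> \<not> M i i"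
    by (simp add: flip_diag_def)
  ultimately show ?thesis
    using True off_diagonal by simp
next
  case False
  then have "parity (flip_diag M) i A = parity M i A"
    by (intro parity_cong) (auto simp: flip_diag_def)
  with False show ?thesis
    by simp
qed

lemma triple_separating_flip_diag:
  fixes M :: "'a::finite \<Rightarrow> 'a \<Rightarrow> bool"
  assumes "triple_separating M"
  shows "triple_separating (flip_diag M)"
proof -
  have "parity_separated (flip_diag M) X Y Z \<longleftrightarrow> parity_separated M X Y Z"
    if "X \<inter> Y = {}" "X \<inter> Z = {}" "Y \<inter> Z = {}" for X Y Z :: "'a set"
    using that by (auto simp: parity_separated_def parity_flip_diag)
  then show ?thesis
    using assms by (simp add: triple_separating_def)
qed

lemma exchange_one_element:
  assumes "finite A" "finite B" "card A = card B" "A \<noteq> B"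
    and "A - B \<subseteq> S" "B - A \<subseteq> S" "finite S" "card S \<le> 3"
  shows "\<exists>p p'. A - B = {p} \<and> B - A = {p'}"
proof -
  have "card (A - B) = card (B - A)"
    using assms(1-3) by (simp add: card_Diff_subset_Int Int_commute)
  moreover have "card (A - B) \<noteq> 0"
  proof
    assume "card (A - B) = 0"
    then have "A \<subseteq> B"
      using assms(1) by auto
    then show False
      using assms(2-4) card_subset_eq by blast
  qed
  moreover have "card (A - B) + card (B - A) \<le> 3"
  proof -
    have "card (A - B) + card (B - A) = card ((A - B) \<union> (B - A))"
      using assms(1,2) by (intro card_Un_disjoint[symmetric]) auto
    also have "\<dots> \<le> card S"
      using assms(5-7) by (intro card_mono) auto
    finally show ?thesis
      using assms(8) by simp
  qed
  ultimately have "card (A - B) = 1" "card (B - A) = 1"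
    by linarith+
  then show ?thesis
    by (metis card_1_singletonE)
qed

lemma card_column_disagreements:
  fixes M :: "'a::finite \<Rightarrow> 'a \<Rightarrow> bool"
  assumes "p \<notin> E" "p' \<notin> E" "p \<in> S" "p' \<in> S" "p \<noteq> p'" "card S = 3"
    and "\<And>k. k \<in> E - S \<Longrightarrow> parity M k (insert p E) \<noteq> parity M k (insert p' E)"
  shows "card E - 1 \<le> card {k. k \<notin> S \<and> M k p \<noteq> M k p'}"
proof -
  have "card (E \<inter> S) \<le> card (S - {p, p'})"
    using assms(1,2) by (intro card_mono) auto
  also have "\<dots> = 1"
    using assms(3-6) by (simp add: card_Diff_subset)
  finally have "card E - 1 \<le> card (E - S)"
    using card_Diff_subset_Int[of E S] card_mono[of E "E \<inter> S"] by (simp add: card_Diff_subset_Int)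
  also have "\<dots> \<le> card {k. k \<notin> S \<and> M k p \<noteq> M k p'}"
  proof (rule card_mono)
    show "E - S \<subseteq> {k. k \<notin> S \<and> M k p \<noteq> M k p'}"
    proof
      fix k assume k: "k \<in> E - S"
      have "parity M k (insert p E) \<longleftrightarrow> M k p \<noteq> parity M k E"
        and "parity M k (insert p' E) \<longleftrightarrow> M k p' \<noteq> parity M k E"
        using assms(1,2) by (simp_all add: parity_insert)
      then show "k \<in> {k. k \<notin> S \<and> M k p \<noteq> M k p'}"
        using k assms(7)[OF k] by auto
    qed
  qed simp
  finally show ?thesis .
qed

lemma flip_diag_middle_good_column:
  fixes M :: "'a::finite \<Rightarrow> 'a \<Rightarrow> bool"
  assumes S: "card S = 3" and AB: "card A = w" "card B = w" "3 < w"
    and few: "\<And>p q. p \<in> S \<Longrightarrow> q \<in> S \<Longrightarrow> p \<noteq> q \<Longrightarrow> card {k. k \<notin> S \<and> M k p \<noteq> M k q} < w - 2"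
  shows "\<exists>q. good_column (parity_label (flip_diag M) A q) (parity_label M S q) (parity_label M B q)"
proof (rule ccontr)
  txt \<open>Otherwise A and B agree off S and have opposite parities at their common points off S.
    So they differ by exchanging two points p, p' of S, and the columns p, p' of M disagree at
    all common points of A and B off S, which are too many.\<close>
  assume no: "\<nexists>q. good_column (parity_label (flip_diag M) A q) (parity_label M S q) (parity_label M B q)"
  have same_outside: "q \<in> A \<longleftrightarrow> q \<in> B" if "q \<notin> S" for q
  proof (rule ccontr)
    assume "(q \<in> A) \<noteq> (q \<in> B)"
    then have "good_column (parity_label (flip_diag M) A q) (parity_label M S q) (parity_label M B q)"
      using that by (intro good_columnI parity_label_range) (auto simp: parity_label_eq_0_iff)
    with no show False by blast
  qed
  have differ: "parity M q A \<noteq> parity M q B" if "q \<in> A" "q \<in> B" "q \<notin> S" for q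
  proof
    assume "parity M q A = parity M q B"
    then have "good_column (parity_label (flip_diag M) A q) (parity_label M S q) (parity_label M B q)"
      using that by (intro good_columnI parity_label_range)
        (auto simp: parity_label_def parity_flip_diag)
    with no show False by blast
  qed
  have "A \<noteq> B"
  proof
    assume "A = B"
    have "\<not> A \<subseteq> S"
      using S AB card_mono[of S A] by auto
    then show False
      using differ \<open>A = B\<close> by blast
  qed
  then obtain p p' where pp': "A - B = {p}" "B - A = {p'}"
    using exchange_one_element[of A B S] same_outside AB S by (auto simp: card_eq_0_iff)
  define E where "E = A \<inter> B"
  have A: "A = insert p E" "p \<notin> E" and B: "B = insert p' E" "p' \<notin> E"
    using pp' by (auto simp: E_def)
  have p: "p \<in> S" "p' \<in> S" "p \<noteq> p'"
    using pp' same_outside by auto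
  have "w - 2 = card E - 1"
    using AB A by simp
  also have "\<dots> \<le> card {k. k \<notin> S \<and> M k p \<noteq> M k p'}"
  proof (rule card_column_disagreements[OF A(2) B(2) p S])
    show "parity M k (insert p E) \<noteq> parity M k (insert p' E)" if "k \<in> E - S" for k
      unfolding A(1)[symmetric] B(1)[symmetric] using differ that by (simp add: E_def)
  qed
  also have "\<dots> < w - 2"
    using few p by blast
  finally show False
    by simp
qed

definition label_word :: "('a::enum \<Rightarrow> 'a \<Rightarrow> bool) \<Rightarrow> 'a set \<Rightarrow> nat list" where
  "label_word M A = map (parity_label M A) Enum.enum"

lemma ex_nth_enum:
  fixes q :: "'a::enum"
  shows "\<exists>k. k < CARD('a) \<and> Enum.enum ! k = q"
  using in_enum[of q] by (simp add: card_UNIV_length_enum in_set_conv_nth)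

lemma label_word_nth:
  fixes A :: "'a::enum set"
  shows "k < CARD('a) \<Longrightarrow> label_word M A ! k = parity_label M A (Enum.enum ! k)"
  by (simp add: label_word_def card_UNIV_length_enum)

lemma label_word_ternary: "label_word M (A :: 'a::enum set) \<in> ternary_vecs CARD('a)"
  by (auto simp: label_word_def ternary_vecs_def card_UNIV_length_enum parity_label_def)

lemma weight_label_word: "weight (label_word M A) = card A"
proof -
  have "weight (label_word M A) = length (filter (\<lambda>q. q \<in> A) Enum.enum)"
    by (simp add: weight_eq_length_filter label_word_def filter_map comp_def parity_label_def)
  also have "\<dots> = card A"
    by (simp add: distinct_length_filter enum_distinct enum_UNIV Int_def)
  finally show ?thesis .
qed

lemma inj_label_word: "inj (label_word M)"
proof
  fix A B assume "label_word M A = label_word M B"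
  then have "parity_label M A q = 0 \<longleftrightarrow> parity_label M B q = 0" for q
    using in_enum[of q] by (simp add: label_word_def map_eq_conv)
  then show "A = B"
    by (auto simp: parity_label_eq_0_iff)
qed

lemma outside_support_label_word:
  assumes "q \<notin> A" "q \<in> B"
  shows "outside_support CARD('a) (label_word M A) (label_word M' (B :: 'a::enum set))"
proof -
  obtain k where "k < CARD('a)" "Enum.enum ! k = q"
    using ex_nth_enum by blast
  then show ?thesis
    using assms unfolding outside_support_def
    by (intro exI[of _ k]) (simp add: label_word_nth parity_label_def)
qed

lemma has_good_column_label_word:
  assumes "good_column (parity_label M1 A q) (parity_label M2 B q) (parity_label M3 C q)"
  shows "has_good_column CARD('a) (label_word M1 A) (label_word M2 B) (label_word M3 (C :: 'a::enum set))"
proof -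
  obtain k where "k < CARD('a)" "Enum.enum ! k = q"
    using ex_nth_enum by blast
  then show ?thesis
    using assms unfolding has_good_column_def
    by (intro exI[of _ k]) (simp add: label_word_nth)
qed

lemma outside_support_label_word_if_card_less:
  fixes A S :: "'a::enum set"
  assumes "card S < card A"
  shows "outside_support CARD('a) (label_word M S) (label_word M' A)"
proof -
  obtain q where "q \<in> A" "q \<notin> S"
    using assms card_mono[of S A] by auto
  then show ?thesis
    by (rule outside_support_label_word[rotated])
qed

lemma has_good_column_label_word_if_card_less:
  fixes A S S' :: "'a::enum set"
  assumes "card S + card S' < card A"
  shows "has_good_column CARD('a) (label_word M S) (label_word M' S') (label_word M'' A)"
proof -
  have "card (S \<union> S') < card A"
    using assms card_Un_le[of S S'] by linarith
  then obtain q where "q \<in> A" "q \<notin> S" "q \<notin> S'"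
    using card_mono[of "S \<union> S'" A] by auto
  then have "good_column (parity_label M S q) (parity_label M' S' q) (parity_label M'' A q)"
    by (intro good_columnI parity_label_range) (simp add: parity_label_eq_0_iff)
  then show ?thesis
    by (rule has_good_column_label_word)
qed

lemma admissible_label_words:
  fixes M :: "'a::enum \<Rightarrow> 'a \<Rightarrow> bool"
  assumes "triple_separating M"
  shows "admissible CARD('a) (label_word M ` {A. card A = w})"
  unfolding admissible_iff
proof (intro conjI ballI impI subsetI)
  show "s \<in> ternary_vecs CARD('a)" if "s \<in> label_word M ` {A. card A = w}" for s
    using that label_word_ternary by blast
next
  fix s t assume "s \<in> label_word M ` {A. card A = w}" "t \<in> label_word M ` {A. card A = w}" "s \<noteq> t"
  then obtain A B where AB: "s = label_word M A" "t = label_word M B" "card A = card B"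
    by auto
  moreover have "A \<noteq> B"
    using AB \<open>s \<noteq> t\<close> by auto
  ultimately have "\<not> B \<subseteq> A"
    using card_subset_eq[of A B] by auto
  then show "outside_support CARD('a) s t"
    using AB outside_support_label_word by blast
next
  fix s t u assume "s \<in> label_word M ` {A. card A = w}" "t \<in> label_word M ` {A. card A = w}"
    "u \<in> label_word M ` {A. card A = w}" "s \<noteq> t \<and> s \<noteq> u \<and> t \<noteq> u"
  then obtain A B C where ABC: "s = label_word M A" "t = label_word M B" "u = label_word M C"
    "card A = card B" "card A = card C"
    by auto
  moreover have "A \<noteq> B" "A \<noteq> C" "B \<noteq> C"
    using ABC \<open>s \<noteq> t \<and> s \<noteq> u \<and> t \<noteq> u\<close> by auto
  ultimately show "has_good_column CARD('a) s t u"
    using parity_label_good_column[OF assms] has_good_column_label_word by metis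
qed

lemma card_Collect_enum: "card {k :: 'a::enum. P k} = length (filter P Enum.enum)"
  using distinct_length_filter[OF enum_distinct, of P] by (simp add: enum_UNIV)

lemma card_label_words: "card (label_word M ` {A :: 'a::enum set. card A = w}) = CARD('a) choose w"
proof -
  have "card (label_word M ` {A :: 'a set. card A = w}) = card {A :: 'a set. card A = w}"
    using inj_label_word by (intro card_image) (blast intro: inj_on_subset)
  also have "\<dots> = CARD('a) choose w"
    using n_subsets[of "UNIV :: 'a set" w] by simp
  finally show ?thesis .
qed

section \<open>Checking triple separation by exhaustive search\<close>

fun parity_list :: "('a \<Rightarrow> 'a \<Rightarrow> bool) \<Rightarrow> 'a \<Rightarrow> 'a list \<Rightarrow> bool" where
  "parity_list M i [] \<longleftrightarrow> False"
| "parity_list M i (j # js) \<longleftrightarrow> M i j \<noteq> parity_list M i js"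

lemma parity_list_eq_parity:
  fixes M :: "'a::finite \<Rightarrow> 'a \<Rightarrow> bool"
  shows "distinct js \<Longrightarrow> parity_list M i js = parity M i (set js)"
  by (induction js) (simp_all add: parity_insert)

definition separated_list :: "('a \<Rightarrow> 'a \<Rightarrow> bool) \<Rightarrow> 'a list \<Rightarrow> 'a list \<Rightarrow> 'a list \<Rightarrow> bool" where
  "separated_list M X Y Z \<longleftrightarrow>
     list_ex (\<lambda>i. parity_list M i Y \<noteq> parity_list M i Z) X \<or>
     list_ex (\<lambda>i. parity_list M i X \<noteq> parity_list M i Z) Y \<or>
     list_ex (\<lambda>i. parity_list M i X \<noteq> parity_list M i Y) Z"

lemma separated_list_eq_parity_separated:
  fixes M :: "'a::finite \<Rightarrow> 'a \<Rightarrow> bool"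
  assumes "distinct X" "distinct Y" "distinct Z"
  shows "separated_list M X Y Z \<longleftrightarrow> parity_separated M (set X) (set Y) (set Z)"
  using assms by (simp add: separated_list_def parity_separated_def parity_list_eq_parity list_ex_iff)

text \<open>
  The parts X, Y, Z are filled along the list, Y only once X is nonempty and Z only once Y is,
  so every triple of disjoint sets is visited exactly when its parts appear in the order of
  their first elements. The if-then-else confines evaluation to the branches that are taken.
\<close>

fun search_separated ::
  "('a \<Rightarrow> 'a \<Rightarrow> bool) \<Rightarrow> 'a list \<Rightarrow> nat \<Rightarrow> nat \<Rightarrow> nat \<Rightarrow> 'a list \<Rightarrow> 'a list \<Rightarrow> 'a list \<Rightarrow> bool"
where
  "search_separated M [] a b c X Y Z \<longleftrightarrow>
     (if a = 0 \<and> b = 0 \<and> c = 0 then separated_list M X Y Z else True)"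
| "search_separated M (p # ps) a b c X Y Z \<longleftrightarrow>
     search_separated M ps a b c X Y Z \<and>
     (if a = 0 then True else search_separated M ps (a - 1) b c (p # X) Y Z) \<and>
     (if b = 0 \<or> X = [] then True else search_separated M ps a (b - 1) c X (p # Y) Z) \<and>
     (if c = 0 \<or> Y = [] then True else search_separated M ps a b (c - 1) X Y (p # Z))"

lemma search_separated_sound:
  fixes M :: "'a::finite \<Rightarrow> 'a \<Rightarrow> bool"
  assumes "search_separated M ps a b c X Y Z" "distinct (X @ Y @ Z @ ps)"
    and "A \<union> B \<union> C \<subseteq> set ps" "A \<inter> B = {}" "A \<inter> C = {}" "B \<inter> C = {}"
    and "card A = a" "card B = b" "card C = c"
    and "X = [] \<Longrightarrow> hd (filter (\<lambda>q. q \<in> A \<union> B \<union> C) ps) \<in> A"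
    and "Y = [] \<Longrightarrow> hd (filter (\<lambda>q. q \<in> B \<union> C) ps) \<in> B"
  shows "parity_separated M (A \<union> set X) (B \<union> set Y) (C \<union> set Z)"
  using assms
proof (induction ps arbitrary: a b c A B C X Y Z)
  case Nil
  then show ?case
    by (simp add: separated_list_eq_parity_separated)
next
  case (Cons p ps)
  have distinct: "distinct (X @ Y @ Z @ ps)" "p \<notin> set X \<union> set Y \<union> set Z \<union> set ps"
    using Cons.prems(2) by auto
  consider "p \<in> A" | "p \<in> B" | "p \<in> C" | "p \<notin> A \<union> B \<union> C"
    by blast
  then show ?case
  proof cases
    case 1
    then have "p \<notin> B" "p \<notin> C" "a \<noteq> 0"
      using Cons.prems(4,5,7) by (auto simp: card_gt_0_iff)
    then have "parity_separated M (A - {p} \<union> set (p # X)) (B \<union> set Y) (C \<union> set Z)"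
      using Cons.prems distinct 1 by (intro Cons.IH) auto
    moreover have "A - {p} \<union> set (p # X) = A \<union> set X"
      using 1 by auto
    ultimately show ?thesis
      by simp
  next
    case 2
    then have "p \<notin> A" "p \<notin> C" "b \<noteq> 0" "X \<noteq> []"
      using Cons.prems(4,6,8,10) by (auto simp: card_gt_0_iff)
    then have "parity_separated M (A \<union> set X) (B - {p} \<union> set (p # Y)) (C \<union> set Z)"
      using Cons.prems distinct 2 by (intro Cons.IH) auto
    moreover have "B - {p} \<union> set (p # Y) = B \<union> set Y"
      using 2 by auto
    ultimately show ?thesis
      by simp
  next
    case 3
    then have "p \<notin> A" "p \<notin> B" "c \<noteq> 0" "X \<noteq> []" "Y \<noteq> []"
      using Cons.prems(5,6,9,10,11) by (auto simp: card_gt_0_iff)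
    then have "parity_separated M (A \<union> set X) (B \<union> set Y) (C - {p} \<union> set (p # Z))"
      using Cons.prems distinct 3 by (intro Cons.IH) auto
    moreover have "C - {p} \<union> set (p # Z) = C \<union> set Z"
      using 3 by auto
    ultimately show ?thesis
      by simp
  next
    case 4
    then show ?thesis
      using Cons.prems distinct by (intro Cons.IH) auto
  qed
qed

lemma hd_filter_enum_mem:
  fixes U :: "'a::enum set"
  assumes "U \<noteq> {}"
  shows "hd (filter (\<lambda>q. q \<in> U) Enum.enum) \<in> U"
proof -
  have "filter (\<lambda>q. q \<in> U) Enum.enum \<noteq> []"
    using assms by (auto simp: filter_empty_conv enum_UNIV)
  then show ?thesis
    using hd_in_set by fastforce
qed

lemma parity_separated_if_search:
  fixes M :: "'a::enum \<Rightarrow> 'a \<Rightarrow> bool"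
  assumes "search_separated M Enum.enum k k k [] [] []"
    and "A \<inter> B = {}" "A \<inter> C = {}" "B \<inter> C = {}" "card A = k" "card B = k" "card C = k"
    and "hd (filter (\<lambda>q. q \<in> A \<union> B \<union> C) Enum.enum) \<in> A"
    and "hd (filter (\<lambda>q. q \<in> B \<union> C) Enum.enum) \<in> B"
  shows "parity_separated M A B C"
  using search_separated_sound[of M Enum.enum k k k "[]" "[]" "[]" A B C] assms
  by (simp add: enum_distinct enum_UNIV)

lemma triple_separating_if_search:
  fixes M :: "'a::enum \<Rightarrow> 'a \<Rightarrow> bool"
  assumes search: "\<And>k. 0 < k \<Longrightarrow> 3 * k \<le> CARD('a) \<Longrightarrow> search_separated M Enum.enum k k k [] [] []"
  shows "triple_separating M"
  unfolding triple_separating_def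
proof (intro allI impI)
  let ?first = "\<lambda>U. hd (filter (\<lambda>q. q \<in> U) (Enum.enum :: 'a list))"
  fix A B C :: "'a set"
  assume disjoint: "A \<inter> B = {}" "A \<inter> C = {}" "B \<inter> C = {}"
    and card: "card A = card B" "card B = card C" and "A \<noteq> {}"
  define k where "k = card A"
  have "3 * k = card (A \<union> B \<union> C)"
    using disjoint card by (simp add: k_def card_Un_disjoint Int_Un_distrib2)
  also have "\<dots> \<le> CARD('a)"
    by (rule card_mono) simp_all
  finally have "search_separated M Enum.enum k k k [] [] []"
    using search \<open>A \<noteq> {}\<close> by (simp add: k_def card_gt_0_iff)
  then have sorted: "parity_separated M X Y Z"
    if "X \<inter> Y = {}" "X \<inter> Z = {}" "Y \<inter> Z = {}" "card X = k" "card Y = k" "card Z = k"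
      "?first (X \<union> Y \<union> Z) \<in> X" "?first (Y \<union> Z) \<in> Y" for X Y Z
    using parity_separated_if_search that by blast
  have first_mem: "?first U \<in> U" if "U \<noteq> {}" for U
    using hd_filter_enum_mem that by blast
  have cards: "card A = k" "card B = k" "card C = k" "B \<union> C \<noteq> {}" "A \<union> C \<noteq> {}" "A \<union> B \<noteq> {}"
    using card \<open>A \<noteq> {}\<close> by (auto simp: k_def)
  have "A \<union> B \<union> C \<noteq> {}"
    using \<open>A \<noteq> {}\<close> by blast
  then consider
    "parity_separated M A B C" | "parity_separated M A C B" | "parity_separated M B A C" |
    "parity_separated M B C A" | "parity_separated M C A B" | "parity_separated M C B A"
    using first_mem[of "A \<union> B \<union> C"] first_mem[of "B \<union> C"] first_mem[of "A \<union> C"] first_mem[of "A \<union> B"]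
      sorted[of A B C] sorted[of A C B] sorted[of B A C] sorted[of B C A] sorted[of C A B] sorted[of C B A]
      disjoint cards
    by (auto simp: Int_commute Un_ac)
  then show "parity_separated M A B C"
    by cases (metis parity_separated_swap12 parity_separated_swap23)+
qed

section \<open>The 11-point gadget\<close>

datatype point = P0 | P1 | P2 | P3 | P4 | P5 | P6 | P7 | P8 | P9 | P10

instantiation point :: enum
begin

definition "enum_point = [P0, P1, P2, P3, P4, P5, P6, P7, P8, P9, P10]"
definition "enum_all_point P \<longleftrightarrow> list_all P (Enum.enum :: point list)"
definition "enum_ex_point P \<longleftrightarrow> list_ex P (Enum.enum :: point list)"

lemma UNIV_point: "UNIV = set (Enum.enum :: point list)"
proof (rule UNIV_eq_I)
  show "x \<in> set Enum.enum" for x :: point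
    by (cases x) (simp_all add: enum_point_def)
qed

instance
  by standard
    (simp_all add: UNIV_point enum_point_def enum_all_point_def enum_ex_point_def list_all_iff list_ex_iff)

end

lemma CARD_point: "CARD(point) = 11"
  by (simp add: card_UNIV_length_enum enum_point_def)

fun gadget :: "point \<Rightarrow> point \<Rightarrow> bool" where
  "gadget P0 j \<longleftrightarrow>
     (case j of P3 \<Rightarrow> True | P4 \<Rightarrow> True | P5 \<Rightarrow> True | P6 \<Rightarrow> True | P7 \<Rightarrow> True | P8 \<Rightarrow> True | P9 \<Rightarrow> True | _ \<Rightarrow> False)"
| "gadget P1 j \<longleftrightarrow>
     (case j of P0 \<Rightarrow> True | P2 \<Rightarrow> True | P6 \<Rightarrow> True | _ \<Rightarrow> False)"
| "gadget P2 j \<longleftrightarrow>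
     (case j of P0 \<Rightarrow> True | P3 \<Rightarrow> True | P4 \<Rightarrow> True | P5 \<Rightarrow> True | P7 \<Rightarrow> True | P8 \<Rightarrow> True | P9 \<Rightarrow> True | _ \<Rightarrow> False)"
| "gadget P3 j \<longleftrightarrow>
     (case j of P7 \<Rightarrow> True | P8 \<Rightarrow> True | P9 \<Rightarrow> True | _ \<Rightarrow> False)"
| "gadget P4 j \<longleftrightarrow>
     (case j of P3 \<Rightarrow> True | P5 \<Rightarrow> True | P7 \<Rightarrow> True | P8 \<Rightarrow> True | P9 \<Rightarrow> True | _ \<Rightarrow> False)"
| "gadget P5 j \<longleftrightarrow>
     (case j of P3 \<Rightarrow> True | P7 \<Rightarrow> True | P9 \<Rightarrow> True | _ \<Rightarrow> False)"
| "gadget P6 j \<longleftrightarrow>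
     (case j of P1 \<Rightarrow> True | P3 \<Rightarrow> True | P4 \<Rightarrow> True | P5 \<Rightarrow> True | P7 \<Rightarrow> True | P8 \<Rightarrow> True | P9 \<Rightarrow> True | _ \<Rightarrow> False)"
| "gadget P7 j \<longleftrightarrow>
     (case j of P3 \<Rightarrow> True | P5 \<Rightarrow> True | P8 \<Rightarrow> True | _ \<Rightarrow> False)"
| "gadget P8 j \<longleftrightarrow>
     (case j of P3 \<Rightarrow> True | P5 \<Rightarrow> True | P9 \<Rightarrow> True | _ \<Rightarrow> False)"
| "gadget P9 j \<longleftrightarrow>
     (case j of P5 \<Rightarrow> True | P7 \<Rightarrow> True | P8 \<Rightarrow> True | _ \<Rightarrow> False)"
| "gadget P10 j \<longleftrightarrow>
     (case j of P0 \<Rightarrow> True | P1 \<Rightarrow> True | P6 \<Rightarrow> True | _ \<Rightarrow> False)"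

lemma search_gadget_1: "search_separated gadget Enum.enum 1 1 1 [] [] []"
  by code_simp

lemma search_gadget_2: "search_separated gadget Enum.enum 2 2 2 [] [] []"
  by code_simp

lemma search_gadget_3: "search_separated gadget Enum.enum 3 3 3 [] [] []"
  by code_simp

definition central_triples :: "point list list" where
  "central_triples = [
    [P0, P1, P2],
    [P0, P1, P4],
    [P0, P1, P6],
    [P0, P1, P10],
    [P0, P2, P4],
    [P0, P2, P6],
    [P0, P2, P10],
    [P0, P4, P6],
    [P0, P4, P10],
    [P0, P6, P10],
    [P1, P2, P4],
    [P1, P2, P6],
    [P1, P2, P10],
    [P1, P4, P6],
    [P1, P4, P10],
    [P1, P6, P10],
    [P2, P4, P6],
    [P2, P4, P10],
    [P2, P6, P10],
    [P3, P4, P5],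
    [P3, P4, P7],
    [P3, P4, P8],
    [P3, P4, P9],
    [P3, P5, P7],
    [P3, P5, P8],
    [P3, P5, P9],
    [P3, P7, P8],
    [P3, P7, P9],
    [P3, P8, P9],
    [P4, P5, P7],
    [P4, P5, P8],
    [P4, P5, P9],
    [P4, P6, P10],
    [P4, P7, P8],
    [P4, P7, P9],
    [P4, P8, P9],
    [P5, P7, P8]]"

lemma central_triples_checked:
  "distinct (map set central_triples) \<and>
   list_all (\<lambda>S. distinct S \<and> length S = 3 \<and>
     list_all (\<lambda>p. list_all (\<lambda>q. p = q \<or>
       length (filter (\<lambda>k. k \<notin> set S \<and> gadget k p \<noteq> gadget k q) Enum.enum) < 5) S) S)
   central_triples"
  by code_simp

lemma card_central_triple: "S \<in> set (map set central_triples) \<Longrightarrow> card S = 3"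
  using central_triples_checked by (auto simp: list_all_iff distinct_card)

lemma central_triple_few_disagreements:
  assumes "S \<in> set (map set central_triples)" "p \<in> S" "q \<in> S" "p \<noteq> q"
  shows "card {k. k \<notin> S \<and> gadget k p \<noteq> gadget k q} < 5"
proof -
  obtain xs where xs: "xs \<in> set central_triples" "S = set xs"
    using assms(1) by auto
  then have "length (filter (\<lambda>k. k \<notin> S \<and> gadget k p \<noteq> gadget k q) Enum.enum) < 5"
    using central_triples_checked assms(2-4) by (auto simp: list_all_iff)
  then show ?thesis
    by (simp add: card_Collect_enum)
qed

lemma card_central_triples: "card (set (map set central_triples)) = 37"
proof -
  have "card (set (map set central_triples)) = length central_triples"
    using central_triples_checked distinct_card by fastforce
  also have "\<dots> = 37"
    by (simp add: central_triples_def)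
  finally show ?thesis .
qed

lemma triple_separating_gadget: "triple_separating gadget"
proof (rule triple_separating_if_search)
  fix k :: nat
  assume "0 < k" "3 * k \<le> CARD(point)"
  then have "k = 1 \<or> k = 2 \<or> k = 3"
    unfolding CARD_point by linarith
  then show "search_separated gadget Enum.enum k k k [] [] []"
    using search_gadget_1 search_gadget_2 search_gadget_3 by blast
qed

definition lower_words :: "nat list set" where
  "lower_words = label_word gadget ` {A. card A = 7}"

text \<open>These are the lower words with the labels 1 and 2 exchanged, by \<open>parity_flip_diag\<close>.\<close>

definition upper_words :: "nat list set" where
  "upper_words = label_word (flip_diag gadget) ` {A. card A = 7}"

definition central_words :: "nat list set" where
  "central_words = label_word gadget ` set (map set central_triples)"

lemma outer_words_cases:
  assumes "x \<in> lower_words \<union> upper_words"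
  obtains M and A :: "point set" where "x = label_word M A" "card A = 7"
  using assms unfolding lower_words_def upper_words_def by blast

lemma central_words_cases:
  assumes "z \<in> central_words"
  obtains S where "z = label_word gadget S" "S \<in> set (map set central_triples)"
  using assms unfolding central_words_def by blast

lemma staircase_gadget: "staircase CARD(point) lower_words central_words upper_words"
proof
  show "admissible CARD(point) lower_words"
    unfolding lower_words_def by (rule admissible_label_words[OF triple_separating_gadget])
  show "admissible CARD(point) upper_words"
    unfolding upper_words_def
    by (rule admissible_label_words[OF triple_separating_flip_diag[OF triple_separating_gadget]])
  show "admissible CARD(point) central_words"
    by (rule admissible_subset[OF admissible_label_words[OF triple_separating_gadget, of 3]])
      (auto simp: central_words_def card_central_triple)
  show "outside_support CARD(point) z x" if "z \<in> central_words" "x \<in> lower_words \<union> upper_words" for z x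
    using that by (elim central_words_cases outer_words_cases)
      (simp add: outside_support_label_word_if_card_less card_central_triple)
  show "has_good_column CARD(point) z z' x"
    if "z \<in> central_words" "z' \<in> central_words" "x \<in> lower_words \<union> upper_words" for z z' x
    using that by (elim central_words_cases outer_words_cases)
      (simp add: has_good_column_label_word_if_card_less card_central_triple)
  show "has_good_column CARD(point) u z l"
    if uzl: "u \<in> upper_words" "z \<in> central_words" "l \<in> lower_words" for u z l
  proof -
    obtain A B S where "u = label_word (flip_diag gadget) A" "card A = 7"
      and "l = label_word gadget B" "card B = 7"
      and "z = label_word gadget S" "S \<in> set (map set central_triples)"
      using uzl by (auto simp: lower_words_def upper_words_def central_words_def)
    moreover have "\<exists>q. good_column (parity_label (flip_diag gadget) A q) (parity_label gadget S q)
        (parity_label gadget B q)"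
      by (rule flip_diag_middle_good_column[where w = 7])
        (use calculation card_central_triple central_triple_few_disagreements in auto)
    ultimately show ?thesis
      using has_good_column_label_word by blast
  qed
qed

lemma card_lower_words: "card lower_words = 11 choose 7"
  by (simp only: lower_words_def card_label_words CARD_point)

lemma card_upper_words: "card upper_words = 11 choose 7"
  by (simp only: upper_words_def card_label_words CARD_point)

lemma card_central_words: "card central_words = 37"
  unfolding central_words_def
  using card_image[OF inj_on_subset[OF inj_label_word subset_UNIV]] card_central_triples by metis

lemma weight_outer_words: "x \<in> lower_words \<union> upper_words \<Longrightarrow> weight x = 7"
  by (elim outer_words_cases) (simp add: weight_label_word)

lemma weight_central_words: "z \<in> central_words \<Longrightarrow> weight z = 3"
  by (elim central_words_cases) (simp add: weight_label_word card_central_triple)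

theorem lemma3p8:
  shows "\<exists>T. admissible 1562 T \<and> card T = 142 * 37 * (11 choose 7) ^ 141 \<and>
             (\<forall>t\<in>T. weight t = 990)"
proof -
  interpret staircase "CARD(point)" lower_words central_words upper_words
    by (rule staircase_gadget)
  have "finite lower_words" "finite central_words" "finite upper_words"
    using card_lower_words card_central_words card_upper_words by (simp_all add: card_ge_0_finite)
  then have "card (words 142) = 142 * 37 * (11 choose 7) ^ 141"
    using card_lower_words card_central_words card_upper_words by (simp add: card_words)
  moreover have "admissible 1562 (words 142)"
    using admissible_words[of 142] by (simp add: CARD_point)
  moreover have "weight t = 990" if "t \<in> words 142" for t
    using weight_words[OF weight_outer_words weight_central_words that] by simp
  ultimately show ?thesis
    by blast
qed

end
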